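(* Let $P_S,H_{SR},H_{SD},H_{RD},\sigma_R^2,\sigma_D^2>0$ and $\eta\in(0,1]$. Set $C_{SR}=\log(1+P_SH_{SR}/\sigma_R^2)$, $C_{SD}=\log(1+P_SH_{SD}/\sigma_D^2)$, $a=C_{SR}-C_{SD}$, $b=C_{SD}$, $c=\eta H_{SR}H_{RD}P_S/\sigma_D^2$, and assume $a>0$. Let $$f_1(\lambda)=\lambda b+(1-\lambda)\Big(b+\log\Big(1+\frac{c\lambda}{1-\lambda}\Big)\Big),\quad \lambda\in(0,1),$$ and consider the problem $\max_{\lambda\in(0,1)}\min\{\lambda C_{SR},\,f_1(\lambda)\}$. Then: (i) the equation $\lambda C_{SR}=f_1(\lambda)$ has exactly one solution $\lambda_1\in(0,1)$, namely $$\lambda_1=\frac{-\frac{1}{a}\mathcal W_{-1}\!\big(-\frac{a}{c}e^{-b-\frac{a}{c}}\big)-\frac1c}{1-\frac{1}{a}\mathcal W_{-1}\!\big(-\frac{a}{c}e^{-b-\frac{a}{c}}\big)-\frac1c};$$ (ii) $f_1$ has exactly one stationary point $\lambda_2\in(0,1)$, namely $$\lambda_2=\frac{e^{\mathcal W_0(\frac{c-1}{e})+1}-1}{e^{\mathcal W_0(\frac{c-1}{e})+1}+c-1};$$ (iii) $\lambda^*=\max\{\lambda_1,\lambda_2\}$ attains the maximum of $\min\{\lambda C_{SR},f_1(\lambda)\}$ over $\lambda\in(0,1)$.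
   Context: $\log$ is the natural logarithm. $\mathcal W_0$ and $\mathcal W_{-1}$ denote the principal and the lower real branches of the Lambert W function (the real solutions $w$ of $we^w=x$ with $w\ge -1$ and $w\le -1$, respectively, for $x\ge -1/e$, resp. $x\in[-1/e,0)$). This is the optimal time-fraction problem for the "ideal" energy-harvesting relay protocol with mutual-information accumulation at the destination: $\lambda$ is the fraction of time the source broadcasts before the relay decodes, the relay forwarding power is $\eta H_{SR}P_S\lambda/(1-\lambda)$, and the achievable rate is $\min\{\lambda C_{SR},\lambda C_{SD}+(1-\lambda)J\}$ with $J=C_{SD}+\log(1+P_RH_{RD}/\sigma_D^2)$, which equals $f_1(\lambda)$ in the second term. *)

theory Defs
  imports "HOL-Analysis.Analysis"
begin

definition LambertW0 :: "real \<Rightarrow> real" where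
  "LambertW0 x = (THE w. w \<ge> -1 \<and> w * exp w = x)"

definition LambertWm1 :: "real \<Rightarrow> real" where
  "LambertWm1 x = (THE w. w \<le> -1 \<and> w * exp w = x)"

end

theory Submission
  imports Defs "HOL-Real_Asymp.Real_Asymp"
begin

text \<open>The substitution \<open>u = 1 + c \<lambda> / (1 - \<lambda>)\<close>, a bijection of \<open>(0,1)\<close> onto
  \<open>(1,\<infinity>)\<close>, gives \<open>\<lambda> C\<^sub>S\<^sub>R - f\<^sub>1(\<lambda>) = (1 - \<lambda>) (a (u - 1) / c - b - ln u)\<close> and
  \<open>f\<^sub>1'(\<lambda>) = 1 - ln u + (c - 1) / u\<close>.
  The first function of \<open>u\<close> is \<open>-b\<close> at \<open>u = 1\<close> and tends to \<open>\<infinity>\<close>, so it has a zero beyond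
  which it stays nonnegative; at that zero \<open>w = - a u / c \<le> -1\<close> solves
  \<open>w e\<^sup>w = - (a/c) e\<^sup>-\<^sup>b\<^sup>-\<^sup>a\<^sup>/\<^sup>c\<close>, which gives \<open>\<lambda>\<^sub>1\<close> through the lower branch of W.
  The second function is decreasing in \<open>u\<close> with a zero at which \<open>y = ln u - 1 \<ge> -1\<close> solves
  \<open>y e\<^sup>y = (c - 1) / e\<close>; hence \<open>f\<^sub>1\<close> rises up to \<open>\<lambda>\<^sub>2\<close> and falls afterwards.
  As \<open>\<lambda> C\<^sub>S\<^sub>R\<close> is increasing, \<open>min {\<lambda> C\<^sub>S\<^sub>R, f\<^sub>1(\<lambda>)}\<close> peaks at the crossing \<open>\<lambda>\<^sub>1\<close> when
  \<open>\<lambda>\<^sub>2 \<le> \<lambda>\<^sub>1\<close>, and otherwise at \<open>\<lambda>\<^sub>2\<close>, where \<open>f\<^sub>1\<close> lies below the line.\<close>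

lemma mult_exp_strict_mono:
  fixes w v :: real assumes "-1 \<le> w" "w < v" shows "w * exp w < v * exp v"
proof (rule DERIV_pos_imp_increasing_open[OF \<open>w < v\<close>])
  fix x assume "w < x" "x < v"
  then have "(1 + x) * exp x > 0" using assms by simp
  moreover have "((\<lambda>x. x * exp x) has_real_derivative (1 + x) * exp x) (at x)"
    by (auto intro!: derivative_eq_intros simp: algebra_simps)
  ultimately show "\<exists>y. ((\<lambda>x. x * exp x) has_real_derivative y) (at x) \<and> y > 0" by blast
qed (intro continuous_intros)

lemma mult_exp_strict_antimono:
  fixes w v :: real assumes "w < v" "v \<le> -1" shows "v * exp v < w * exp w"
proof (rule DERIV_neg_imp_decreasing_open[OF \<open>w < v\<close>])
  fix x assume "w < x" "x < v"
  then have "(1 + x) * exp x < 0" using assms by (simp add: mult_neg_pos)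
  moreover have "((\<lambda>x. x * exp x) has_real_derivative (1 + x) * exp x) (at x)"
    by (auto intro!: derivative_eq_intros simp: algebra_simps)
  ultimately show "\<exists>y. ((\<lambda>x. x * exp x) has_real_derivative y) (at x) \<and> y < 0" by blast
qed (intro continuous_intros)

lemma LambertW0_mult_exp:
  fixes w :: real assumes "-1 \<le> w" shows "LambertW0 (w * exp w) = w"
  unfolding LambertW0_def
proof (rule the_equality)
  fix v assume "-1 \<le> v \<and> v * exp v = w * exp w"
  then show "v = w"
    using mult_exp_strict_mono[of v w] mult_exp_strict_mono[of w v] assms
    by (cases v w rule: linorder_cases) auto
qed (use assms in auto)

lemma LambertWm1_mult_exp:
  fixes w :: real assumes "w \<le> -1" shows "LambertWm1 (w * exp w) = w"
  unfolding LambertWm1_def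
proof (rule the_equality)
  fix v assume "v \<le> -1 \<and> v * exp v = w * exp w"
  then show "v = w"
    using mult_exp_strict_antimono[of v w] mult_exp_strict_antimono[of w v] assms
    by (cases v w rule: linorder_cases) auto
qed (use assms in auto)

lemma mono_on_antimono_on_if_deriv_changes_sign:
  fixes f f' :: "real \<Rightarrow> real"
  assumes deriv: "\<And>x. lo < x \<Longrightarrow> x < hi \<Longrightarrow> (f has_real_derivative f' x) (at x)"
    and up: "\<And>x. lo < x \<Longrightarrow> x \<le> p \<Longrightarrow> f' x \<ge> 0"
    and down: "\<And>x. p \<le> x \<Longrightarrow> x < hi \<Longrightarrow> f' x \<le> 0"
  shows "mono_on ({lo<..<hi} \<inter> {..p}) f" "antimono_on ({lo<..<hi} \<inter> {p..}) f"
proof -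
  show "mono_on ({lo<..<hi} \<inter> {..p}) f"
  proof (rule mono_onI)
    fix x y assume "x \<in> {lo<..<hi} \<inter> {..p}" "y \<in> {lo<..<hi} \<inter> {..p}" "x \<le> y"
    then show "f x \<le> f y"
      using deriv up by (intro DERIV_nonneg_imp_nondecreasing[OF \<open>x \<le> y\<close>]) fastforce
  qed
  show "antimono_on ({lo<..<hi} \<inter> {p..}) f"
  proof (rule monotone_onI)
    fix x y assume "x \<in> {lo<..<hi} \<inter> {p..}" "y \<in> {lo<..<hi} \<inter> {p..}" "x \<le> y"
    then show "f y \<le> f x"
      using deriv down by (intro deriv_nonpos_imp_antimono[where g' = f', OF _ _ \<open>x \<le> y\<close>]) auto
  qed
qed

lemma max_min_at_crossing_or_peak:
  fixes f g :: "real \<Rightarrow> real"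
  assumes "mono g" and up: "mono_on (I \<inter> {..p}) f" and down: "antimono_on (I \<inter> {p..}) f"
    and "p \<in> I" "q \<in> I" "x \<in> I" and cross: "g q = f q" and "q < p \<Longrightarrow> f p \<le> g p"
  shows "min (g x) (f x) \<le> min (g (max q p)) (f (max q p))"
proof (cases "p \<le> q")
  case p_le_q: True
  have "g x \<le> g q \<or> f x \<le> f q"
  proof (cases "x \<le> q")
    case True then show ?thesis using \<open>mono g\<close> by (simp add: monoD)
  next
    case False then show ?thesis
      using down p_le_q assms(4-6) by (auto intro: monotone_onD)
  qed
  then show ?thesis using p_le_q cross by (auto simp: max_def)
next
  case False
  have "f x \<le> f p"
    using up down assms(4,6) by (cases "x \<le> p") (auto intro: monotone_onD)
  then show ?thesis using False assms(8) by (auto simp: max_def)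
qed

text \<open>\<open>relay_gain c \<lambda> = 1 + P\<^sub>R H\<^sub>R\<^sub>D / \<sigma>\<^sub>D\<^sup>2\<close> for the harvested relay power
  \<open>P\<^sub>R = \<eta> H\<^sub>S\<^sub>R P\<^sub>S \<lambda> / (1 - \<lambda>)\<close>; \<open>accumulated_rate b c\<close> is \<open>f\<^sub>1\<close>.\<close>

definition relay_gain :: "real \<Rightarrow> real \<Rightarrow> real" where
  "relay_gain c l = 1 + c * l / (1 - l)"

definition accumulated_rate :: "real \<Rightarrow> real \<Rightarrow> real \<Rightarrow> real" where
  "accumulated_rate b c l = l * b + (1 - l) * (b + ln (relay_gain c l))"

definition crossing_gap :: "real \<Rightarrow> real \<Rightarrow> real \<Rightarrow> real \<Rightarrow> real" where
  "crossing_gap a b c u = a * (u - 1) / c - b - ln u"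

definition rate_slope :: "real \<Rightarrow> real \<Rightarrow> real" where
  "rate_slope c u = 1 - ln u + (c - 1) / u"

lemma relay_gain_gt_1: "c > 0 \<Longrightarrow> 0 < l \<Longrightarrow> l < 1 \<Longrightarrow> relay_gain c l > 1"
  by (simp add: relay_gain_def)

lemma relay_gain_mono:
  assumes "c \<ge> 0" "l \<le> l'" "l' < 1" shows "relay_gain c l \<le> relay_gain c l'"
proof -
  have "l / (1 - l) \<le> l' / (1 - l')" using assms by (simp add: field_simps)
  from mult_left_mono[OF this \<open>c \<ge> 0\<close>] show ?thesis by (simp add: relay_gain_def)
qed

lemma relay_gain_inverse:
  assumes "c > 0" "l < 1"
  shows "(relay_gain c l - 1) / (relay_gain c l - 1 + c) = l"
proof -
  have "relay_gain c l - 1 + c = c / (1 - l)" using assms by (simp add: relay_gain_def field_simps)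
  then show ?thesis using assms by (simp add: relay_gain_def field_simps)
qed

lemma relay_gain_preimage:
  assumes "c > 0" "u > 1"
  shows "(u - 1) / (u - 1 + c) \<in> {0<..<1}" "relay_gain c ((u - 1) / (u - 1 + c)) = u"
proof -
  show "(u - 1) / (u - 1 + c) \<in> {0<..<1}" using assms by simp
  have "1 - (u - 1) / (u - 1 + c) = c / (u - 1 + c)" using assms by (simp add: field_simps)
  then show "relay_gain c ((u - 1) / (u - 1 + c)) = u"
    using assms by (simp add: relay_gain_def)
qed

lemma accumulated_rate_gap:
  assumes "c > 0" "l < 1"
  shows "l * (a + b) - accumulated_rate b c l = (1 - l) * crossing_gap a b c (relay_gain c l)"
proof -
  have "a * (relay_gain c l - 1) / c = a * l / (1 - l)"
    using assms by (simp add: relay_gain_def)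
  then show ?thesis
    using assms by (simp add: accumulated_rate_def crossing_gap_def field_simps)
qed

lemma relay_gain_has_derivative:
  assumes "l < 1" shows "(relay_gain c has_real_derivative c / (1 - l)\<^sup>2) (at l)"
  unfolding relay_gain_def [abs_def] using assms
  by (auto intro!: derivative_eq_intros simp: field_simps power2_eq_square)

lemma accumulated_rate_has_derivative:
  assumes "c > 0" "0 < l" "l < 1"
  shows "(accumulated_rate b c has_real_derivative rate_slope c (relay_gain c l)) (at l)"
proof -
  define g where "g = relay_gain c l"
  have g: "g > 0" "g * (1 - l) = 1 - l + c * l"
    using relay_gain_gt_1[OF assms] assms by (simp_all add: g_def) (simp add: relay_gain_def field_simps)
  have "(accumulated_rate b c has_real_derivative
          b - (b + ln g) + (1 - l) * (c / (1 - l)\<^sup>2 / g)) (at l)"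
    unfolding accumulated_rate_def [abs_def] g_def using g(1) assms
    by (auto intro!: derivative_eq_intros relay_gain_has_derivative simp: g_def mult.commute)
  moreover have "(1 - l) * (c / (1 - l)\<^sup>2 / g) = 1 + (c - 1) / g"
  proof -
    have "c = (g + c - 1) * (1 - l)" using g(2) by (simp add: algebra_simps)
    then have "(1 - l) * (c / (1 - l)\<^sup>2 / g) = (g + c - 1) * (1 - l) / ((1 - l) * g)"
      using assms by (simp add: power2_eq_square)
    also have "\<dots> = 1 + (c - 1) / g" using g(1) assms by (simp add: field_simps)
    finally show ?thesis .
  qed
  ultimately show ?thesis by (simp add: g_def rate_slope_def algebra_simps)
qed

lemma crossing_gap_root_exists:
  assumes "a > 0" "b > 0" "c > 0" shows "\<exists>u>1. crossing_gap a b c u = 0"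
proof -
  have "filterlim (\<lambda>u. a / c * u - ln u) at_top at_top"
    using assms by real_asymp
  then have "eventually (\<lambda>u. a / c * u - ln u \<ge> a / c + b \<and> u \<ge> 1) at_top"
    by (auto simp: filterlim_at_top intro: eventually_conj eventually_ge_at_top)
  then obtain M where M: "a / c * M - ln M \<ge> a / c + b" "M \<ge> 1"
    unfolding eventually_at_top_linorder by blast
  have gap_eq: "crossing_gap a b c u = a / c * u - ln u - (a / c + b)" for u
    using assms by (simp add: crossing_gap_def field_simps)
  have "\<exists>u. 1 \<le> u \<and> u \<le> M \<and> crossing_gap a b c u = 0"
    using assms M by (intro IVT') (auto simp: gap_eq intro!: continuous_intros)
  then obtain u where "1 \<le> u" "crossing_gap a b c u = 0" by blast
  moreover have "u \<noteq> 1" using calculation assms by (auto simp: crossing_gap_def)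
  ultimately show ?thesis by force
qed

lemma crossing_gap_root_large:
  assumes "a > 0" "b > 0" "c > 0" "u > 1" "crossing_gap a b c u = 0"
  shows "a * u / c > 1"
proof (rule ccontr)
  assume "\<not> a * u / c > 1"
  then have "a * u \<le> c" using assms by (simp add: field_simps)
  then have "(u - 1) * (a * u) \<le> (u - 1) * c" using assms by (simp add: mult_left_mono)
  then have "a * (u - 1) / c \<le> 1 - 1 / u" using assms by (simp add: field_simps)
  also have "\<dots> \<le> ln u"
    using ln_le_minus_one[of "1 / u"] assms by (simp add: ln_div)
  finally show False using assms by (simp add: crossing_gap_def)
qed

lemma crossing_gap_nonneg_beyond_root:
  assumes "a > 0" "b > 0" "c > 0" "u\<^sub>0 > 1" "crossing_gap a b c u\<^sub>0 = 0" "u\<^sub>0 \<le> u"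
  shows "crossing_gap a b c u \<ge> 0"
proof -
  have "1 / u\<^sub>0 < a / c" using crossing_gap_root_large[OF assms(1-5)] assms by (simp add: field_simps)
  then have "(u - u\<^sub>0) / u\<^sub>0 \<le> (u - u\<^sub>0) * (a / c)"
    using mult_left_mono[of "1 / u\<^sub>0" "a / c" "u - u\<^sub>0"] assms by simp
  moreover have "ln u - ln u\<^sub>0 \<le> (u - u\<^sub>0) / u\<^sub>0" using assms by (intro ln_diff_le) auto
  moreover have "a * (u - 1) / c = a * (u\<^sub>0 - 1) / c + (u - u\<^sub>0) * (a / c)"
    using assms by (simp add: field_simps)
  ultimately show ?thesis using assms(5) by (simp add: crossing_gap_def)
qed

definition crossing_point :: "real \<Rightarrow> real \<Rightarrow> real \<Rightarrow> real" where
  "crossing_point a b c =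
     (- (1/a) * LambertWm1 (- (a/c) * exp (- b - a/c)) - 1/c)
     / (1 - (1/a) * LambertWm1 (- (a/c) * exp (- b - a/c)) - 1/c)"

definition stationary_point :: "real \<Rightarrow> real" where
  "stationary_point c =
     (exp (LambertW0 ((c - 1) / exp 1) + 1) - 1) / (exp (LambertW0 ((c - 1) / exp 1) + 1) + c - 1)"

lemma crossing_gap_root_LambertWm1:
  assumes "a > 0" "b > 0" "c > 0" "u > 1" "crossing_gap a b c u = 0"
  shows "LambertWm1 (- (a/c) * exp (- b - a/c)) = - a * u / c"
proof -
  have "ln u + - a * u / c = - b - a / c" using assms by (simp add: crossing_gap_def field_simps)
  moreover have "u * exp (- a * u / c) = exp (ln u + - a * u / c)"
    using assms(4) by (simp only: exp_add exp_ln[of u])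
  ultimately have "(- a * u / c) * exp (- a * u / c) = - (a/c) * exp (- b - a/c)" by simp
  moreover have "- a * u / c \<le> -1" using crossing_gap_root_large[OF assms] by simp
  ultimately show ?thesis using LambertWm1_mult_exp by metis
qed

lemma crossing_point_eq_root:
  assumes "a > 0" "b > 0" "c > 0" "u > 1" "crossing_gap a b c u = 0"
  shows "crossing_point a b c = (u - 1) / (u - 1 + c)"
proof -
  have "u / c - 1 / c = (u - 1) / c" by (simp add: diff_divide_distrib)
  moreover have "1 + u / c - 1 / c = (u - 1 + c) / c" using assms by (simp add: field_simps)
  ultimately have "crossing_point a b c = ((u - 1) / c) / ((u - 1 + c) / c)"
    using crossing_gap_root_LambertWm1[OF assms] assms(1) by (simp add: crossing_point_def)
  then show ?thesis using assms by simp
qed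

lemma rate_slope_antimono:
  assumes "c > 0" "1 \<le> u" "u \<le> w" shows "rate_slope c w \<le> rate_slope c u"
proof (rule deriv_nonpos_imp_antimono[OF _ _ \<open>u \<le> w\<close>])
  fix x assume x: "x \<in> {u..w}"
  then show "(rate_slope c has_real_derivative - (x + c - 1) / x\<^sup>2) (at x)"
    using assms unfolding rate_slope_def [abs_def]
    by (auto intro!: derivative_eq_intros simp: field_simps power2_eq_square)
  show "- (x + c - 1) / x\<^sup>2 \<le> 0" using x assms by (intro divide_nonpos_pos) auto
qed

lemma rate_slope_root_exists:
  assumes "c > 0" shows "\<exists>v>1. rate_slope c v = 0"
proof -
  have "filterlim (\<lambda>v. 1 - ln v + (c - 1) / v) at_bot at_top"
    by real_asymp
  then have "filterlim (rate_slope c) at_bot at_top"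
    by (simp add: rate_slope_def [abs_def])
  then have "eventually (\<lambda>v. rate_slope c v \<le> 0 \<and> v \<ge> 1) at_top"
    by (auto simp: filterlim_at_bot intro: eventually_conj eventually_ge_at_top)
  then obtain M where M: "rate_slope c M \<le> 0" "M \<ge> 1"
    unfolding eventually_at_top_linorder by blast
  have "\<exists>v. 1 \<le> v \<and> v \<le> M \<and> rate_slope c v = 0"
    using assms M unfolding rate_slope_def by (intro IVT2') (auto intro!: continuous_intros)
  then obtain v where "1 \<le> v" "rate_slope c v = 0" by blast
  moreover have "v \<noteq> 1" using calculation assms by (auto simp: rate_slope_def)
  ultimately show ?thesis by force
qed

lemma rate_slope_root_LambertW0:
  assumes "v \<ge> 1" "rate_slope c v = 0"
  shows "exp (LambertW0 ((c - 1) / exp 1) + 1) = v"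
proof -
  have "(ln v - 1) * exp (ln v - 1) = (c - 1) / exp 1"
    using assms by (simp add: rate_slope_def exp_diff field_simps)
  moreover have "ln v - 1 \<ge> -1" using assms by simp
  ultimately have "LambertW0 ((c - 1) / exp 1) = ln v - 1" using LambertW0_mult_exp by metis
  then show ?thesis using assms by simp
qed

lemma stationary_point_eq_root:
  assumes "v \<ge> 1" "rate_slope c v = 0"
  shows "stationary_point c = (v - 1) / (v - 1 + c)"
  using rate_slope_root_LambertW0[OF assms] by (simp add: stationary_point_def algebra_simps)

lemma crossing_point_mem:
  assumes "a > 0" "b > 0" "c > 0" shows "crossing_point a b c \<in> {0<..<1}"
proof -
  obtain u where "u > 1" "crossing_gap a b c u = 0" using crossing_gap_root_exists[OF assms] by blast
  then show ?thesis using crossing_point_eq_root assms relay_gain_preimage by metis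
qed

lemma crossing_iff:
  assumes "a > 0" "b > 0" "c > 0" "0 < l" "l < 1"
  shows "l * (a + b) = accumulated_rate b c l \<longleftrightarrow> l = crossing_point a b c"
proof -
  have "l * (a + b) = accumulated_rate b c l \<longleftrightarrow> crossing_gap a b c (relay_gain c l) = 0"
    using accumulated_rate_gap[of c l a b] assms by auto
  also have "\<dots> \<longleftrightarrow> l = crossing_point a b c"
  proof
    assume "crossing_gap a b c (relay_gain c l) = 0"
    then show "l = crossing_point a b c"
      using crossing_point_eq_root relay_gain_gt_1 relay_gain_inverse assms by metis
  next
    obtain u where "u > 1" "crossing_gap a b c u = 0"
      using crossing_gap_root_exists[OF assms(1-3)] by blast
    moreover assume "l = crossing_point a b c"
    ultimately show "crossing_gap a b c (relay_gain c l) = 0"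
      using crossing_point_eq_root relay_gain_preimage assms by metis
  qed
  finally show ?thesis .
qed

lemma stationary_point_mem:
  assumes "c > 0" shows "stationary_point c \<in> {0<..<1}"
proof -
  obtain v where "v > 1" "rate_slope c v = 0" using rate_slope_root_exists[OF assms] by blast
  then show ?thesis using stationary_point_eq_root assms relay_gain_preimage by (metis less_imp_le)
qed

lemma relay_gain_stationary_point:
  assumes "c > 0" shows "rate_slope c (relay_gain c (stationary_point c)) = 0"
proof -
  obtain v where "v > 1" "rate_slope c v = 0" using rate_slope_root_exists[OF assms] by blast
  then show ?thesis using stationary_point_eq_root assms relay_gain_preimage by (metis less_imp_le)
qed

lemma stationary_iff:
  assumes "c > 0" "0 < l" "l < 1"
  shows "(accumulated_rate b c has_real_derivative 0) (at l) \<longleftrightarrow> l = stationary_point c"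
proof -
  have "(accumulated_rate b c has_real_derivative 0) (at l) \<longleftrightarrow> rate_slope c (relay_gain c l) = 0"
    using accumulated_rate_has_derivative[OF assms] DERIV_unique by metis
  also have "\<dots> \<longleftrightarrow> l = stationary_point c"
    using stationary_point_eq_root relay_gain_gt_1 relay_gain_inverse relay_gain_stationary_point assms
    by (metis less_imp_le)
  finally show ?thesis .
qed

lemma accumulated_rate_unimodal:
  assumes "c > 0"
  shows "mono_on ({0<..<1} \<inter> {..stationary_point c}) (accumulated_rate b c)"
    "antimono_on ({0<..<1} \<inter> {stationary_point c..}) (accumulated_rate b c)"
proof -
  let ?p = "stationary_point c" and ?slope = "\<lambda>x. rate_slope c (relay_gain c x)"
  have p: "0 < ?p" "?p < 1" using stationary_point_mem[OF assms] by auto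
  have slope_p: "?slope ?p = 0" using relay_gain_stationary_point[OF assms] .
  have gain_ge_1: "1 \<le> relay_gain c x" if "0 < x" "x < 1" for x
    using relay_gain_gt_1[OF assms that] by simp
  have deriv: "(accumulated_rate b c has_real_derivative ?slope x) (at x)" if "0 < x" "x < 1" for x
    using accumulated_rate_has_derivative[OF assms that] .
  have "?slope x \<ge> 0" if "0 < x" "x \<le> ?p" for x
  proof -
    have "1 \<le> relay_gain c x" using gain_ge_1 that p by simp
    moreover have "relay_gain c x \<le> relay_gain c ?p" using relay_gain_mono that p assms by simp
    ultimately show ?thesis using rate_slope_antimono[OF assms] slope_p by metis
  qed
  moreover have "?slope x \<le> 0" if "?p \<le> x" "x < 1" for x
  proof -
    have "1 \<le> relay_gain c ?p" using gain_ge_1 p by simp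
    moreover have "relay_gain c ?p \<le> relay_gain c x" using relay_gain_mono that p assms by simp
    ultimately show ?thesis using rate_slope_antimono[OF assms] slope_p by metis
  qed
  ultimately show "mono_on ({0<..<1} \<inter> {..?p}) (accumulated_rate b c)"
    "antimono_on ({0<..<1} \<inter> {?p..}) (accumulated_rate b c)"
    using mono_on_antimono_on_if_deriv_changes_sign[of 0 1 "accumulated_rate b c" ?slope ?p] deriv
    by auto
qed

lemma accumulated_rate_le_beyond_crossing:
  assumes "a > 0" "b > 0" "c > 0" "0 < l\<^sub>0" "l\<^sub>0 \<le> l" "l < 1"
    and "l\<^sub>0 * (a + b) = accumulated_rate b c l\<^sub>0"
  shows "accumulated_rate b c l \<le> l * (a + b)"
proof -
  have "crossing_gap a b c (relay_gain c l\<^sub>0) = 0"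
    using accumulated_rate_gap[of c l\<^sub>0 a b] assms by auto
  then have "crossing_gap a b c (relay_gain c l) \<ge> 0"
    using assms relay_gain_gt_1 relay_gain_mono
    by (intro crossing_gap_nonneg_beyond_root[of a b c "relay_gain c l\<^sub>0"]) auto
  then have "(1 - l) * crossing_gap a b c (relay_gain c l) \<ge> 0" using assms by simp
  then show ?thesis using accumulated_rate_gap[of c l a b] assms by simp
qed

theorem theorem1:
  fixes PS HSR HSD HRD sR2 sD2 \<eta> :: real
    and CSR CSD a b c lam1 lam2 :: real
    and f1 :: "real \<Rightarrow> real"
  assumes pos: "PS > 0" "HSR > 0" "HSD > 0" "HRD > 0" "sR2 > 0" "sD2 > 0"
    and eta: "0 < \<eta>" "\<eta> \<le> 1"
    and CSR_def: "CSR = ln (1 + PS * HSR / sR2)"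
    and CSD_def: "CSD = ln (1 + PS * HSD / sD2)"
    and a_def: "a = CSR - CSD"
    and b_def: "b = CSD"
    and c_def: "c = \<eta> * HSR * HRD * PS / sD2"
    and a_pos: "a > 0"
    and f1_def: "f1 = (\<lambda>l. l * b + (1 - l) * (b + ln (1 + c * l / (1 - l))))"
    and l1_def: "lam1 = (- (1/a) * LambertWm1 (- (a/c) * exp (- b - a/c)) - 1/c)
                     / (1 - (1/a) * LambertWm1 (- (a/c) * exp (- b - a/c)) - 1/c)"
    and l2_def: "lam2 = (exp (LambertW0 ((c - 1) / exp 1) + 1) - 1)
                     / (exp (LambertW0 ((c - 1) / exp 1) + 1) + c - 1)"
  shows "(lam1 \<in> {0<..<1} \<and> lam1 * CSR = f1 lam1 \<and>
           (\<forall>l\<in>{0<..<1}. l * CSR = f1 l \<longrightarrow> l = lam1))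
       \<and> (lam2 \<in> {0<..<1} \<and> (f1 has_real_derivative 0) (at lam2) \<and>
           (\<forall>l\<in>{0<..<1}. (f1 has_real_derivative 0) (at l) \<longrightarrow> l = lam2))
       \<and> (max lam1 lam2 \<in> {0<..<1} \<and>
           (\<forall>l\<in>{0<..<1}. min (l * CSR) (f1 l)
              \<le> min (max lam1 lam2 * CSR) (f1 (max lam1 lam2))))"
proof -
  have b: "b > 0" using pos unfolding b_def CSD_def by (intro ln_gt_zero) simp
  have c: "c > 0" using pos eta unfolding c_def by simp
  have CSR: "CSR = a + b" using a_def b_def by simp
  have f1: "f1 = accumulated_rate b c" unfolding f1_def accumulated_rate_def relay_gain_def ..
  have lam1: "lam1 = crossing_point a b c" unfolding l1_def crossing_point_def ..
  have lam2: "lam2 = stationary_point c" unfolding l2_def stationary_point_def ..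
  have mem: "lam1 \<in> {0<..<1}" "lam2 \<in> {0<..<1}"
    using crossing_point_mem[OF a_pos b c] stationary_point_mem[OF c] by (simp_all add: lam1 lam2)
  have cross: "l * CSR = f1 l \<longleftrightarrow> l = lam1" if "l \<in> {0<..<1}" for l
    using crossing_iff[OF a_pos b c] that by (simp add: CSR f1 lam1)
  have stationary: "(f1 has_real_derivative 0) (at l) \<longleftrightarrow> l = lam2" if "l \<in> {0<..<1}" for l
    using stationary_iff[OF c] that by (simp add: f1 lam2)
  have "min (l * CSR) (f1 l) \<le> min (max lam1 lam2 * CSR) (f1 (max lam1 lam2))"
    if "l \<in> {0<..<1}" for l
  proof (rule max_min_at_crossing_or_peak[where I = "{0<..<1}" and g = "\<lambda>l. l * CSR"])
    show "mono (\<lambda>l. l * CSR)" using a_pos b CSR by (intro monoI mult_right_mono) auto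
    show "lam1 < lam2 \<Longrightarrow> f1 lam2 \<le> lam2 * CSR"
      using accumulated_rate_le_beyond_crossing[OF a_pos b c] cross mem by (simp add: CSR f1)
  qed (use accumulated_rate_unimodal[OF c] mem cross that in \<open>simp_all add: f1 lam2\<close>)
  then show ?thesis using mem cross stationary by (auto simp: max_def)
qed

end
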